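(* For any finite alphabet $\mathfrak{G}$ and any $\mathfrak{G}$-trees $\mathfrak{s}$, $\mathfrak{t}$, $\mathfrak{s}'$, $\mathfrak{t}'$ such that $\mathfrak{s} \preceq \mathfrak{t}$ and $\mathfrak{s}' \preceq \mathfrak{t}'$, the intervals $[\mathfrak{s},\mathfrak{t}]$ and $[\mathfrak{s}',\mathfrak{t}']$ of the $\mathfrak{G}$-prefix poset are isomorphic as posets if and only if $\mathrm{sh}(\lozenge_{|\mathfrak{s}|}[\mathfrak{t}\setminus\mathfrak{s}]) = \mathrm{sh}(\lozenge_{|\mathfrak{s}'|}[\mathfrak{t}'\setminus\mathfrak{s}'])$.
   Context: $\mathfrak{G}$ is a finite alphabet (letters with arities $\geq 1$). A $\mathfrak{G}$-tree is either the leaf (the tree with no internal node) or $\mathtt{a}[\mathfrak{s}_1,\dots,\mathfrak{s}_{|\mathtt{a}|}]$ with root decorated by $\mathtt{a}\in\mathfrak{G}$; $|\mathfrak{t}|$ denotes the number of leaves, ordered left to right, and $\mathfrak{t}\circ[\mathfrak{r}_1,\dots,\mathfrak{r}_{|\mathfrak{t}|}]$ is obtained by grafting the root of each $\mathfrak{r}_i$ onto the $i$-th leaf of $\mathfrak{t}$. The $\mathfrak{G}$-prefix poset is the set of $\mathfrak{G}$-trees ordered by $\mathfrak{s}\preceq\mathfrak{t}$ iff $\mathfrak{s}$ is a prefix of $\mathfrak{t}$, i.e. $\mathfrak{t}=\mathfrak{s}\circ[\mathfrak{r}_1,\dots,\mathfrak{r}_{|\mathfrak{s}|}]$ for some $\mathfrak{G}$-trees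 $\mathfrak{r}_i$ (equivalently, $\mathfrak{t}$ is obtained from $\mathfrak{s}$ by successively replacing leaves by internal nodes decorated by letters). In this case the difference $\mathfrak{t}\setminus\mathfrak{s}$ is the (unique) forest $(\mathfrak{r}_1,\dots,\mathfrak{r}_{|\mathfrak{s}|})$, and $\lozenge_k[\mathfrak{r}_1,\dots,\mathfrak{r}_k]$ is the tree obtained by grafting $\mathfrak{r}_1,\dots,\mathfrak{r}_k$ onto a root decorated by a new letter $\lozenge_k$ of arity $k$. A shadow is a finite (possibly empty) multiset of shadows (a nonplanar undecorated rooted tree). For a $\mathfrak{G}$-tree $\mathfrak{t}$ different from the leaf with root of arity $k$, $\mathrm{sh}(\mathfrak{t})$ is the multiset of the $\mathrm{sh}(\mathfrak{t}(i))$ for those $i\in[k]$ such that the $i$-th subtree $\mathfrak{t}(i)$ of the root is not the leaf. *)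

theory Defs
  imports Main "HOL-Library.Multiset"
begin

text \<open>Planar trees whose internal nodes are decorated by letters; the children list of a
node is ordered left to right.  The leaf is the tree with no internal node.\<close>
datatype 'a gtree = Leaf | Node 'a "'a gtree list"

definition alphabet :: "'a set \<Rightarrow> ('a \<Rightarrow> nat) \<Rightarrow> bool" where
  "alphabet G ar \<longleftrightarrow> finite G \<and> (\<forall>a\<in>G. ar a \<ge> 1)"

fun gtree_wf :: "'a set \<Rightarrow> ('a \<Rightarrow> nat) \<Rightarrow> 'a gtree \<Rightarrow> bool" where
  "gtree_wf G ar Leaf = True"
| "gtree_wf G ar (Node a ts) = (a \<in> G \<and> length ts = ar a \<and> (\<forall>t\<in>set ts. gtree_wf G ar t))"

fun nleaves :: "'a gtree \<Rightarrow> nat" where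
  "nleaves Leaf = 1"
| "nleaves (Node a ts) = sum_list (map nleaves ts)"

fun chunks :: "nat list \<Rightarrow> 'b list \<Rightarrow> 'b list list" where
  "chunks [] xs = []"
| "chunks (n # ns) xs = take n xs # chunks ns (drop n xs)"

lemma length_chunks [simp]: "length (chunks ns xs) = length ns"
  by (induction ns arbitrary: xs) auto

text \<open>Grafting: graft t [r_1,...,r_n] grafts the root of r_i onto the i-th leaf of t
(meaningful when n = nleaves t).\<close>
function graft :: "'a gtree \<Rightarrow> 'a gtree list \<Rightarrow> 'a gtree" where
  "graft Leaf rs = hd rs"
| "graft (Node a ts) rs =
     Node a (map (\<lambda>i. graft (ts ! i) (chunks (map nleaves ts) rs ! i)) [0..<length ts])"
  by pat_completeness auto
termination
  by (relation "measure (size \<circ> fst)")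
     (auto simp: size_list_estimation' intro: size_list_estimation' [OF nth_mem] less_le_trans
           dest!: nth_mem)

definition gprefix :: "'a set \<Rightarrow> ('a \<Rightarrow> nat) \<Rightarrow> 'a gtree \<Rightarrow> 'a gtree \<Rightarrow> bool" where
  "gprefix G ar s t \<longleftrightarrow>
     (\<exists>rs. length rs = nleaves s \<and> (\<forall>r\<in>set rs. gtree_wf G ar r) \<and> t = graft s rs)"

text \<open>The difference t \ s: the unique forest (r_1,...,r_|s|) with t = s o [r_1,...,r_|s|].\<close>
definition tdiff :: "'a set \<Rightarrow> ('a \<Rightarrow> nat) \<Rightarrow> 'a gtree \<Rightarrow> 'a gtree \<Rightarrow> 'a gtree list" where
  "tdiff G ar t s =
     (THE rs. length rs = nleaves s \<and> (\<forall>r\<in>set rs. gtree_wf G ar r) \<and> t = graft s rs)"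

definition ginterval :: "'a set \<Rightarrow> ('a \<Rightarrow> nat) \<Rightarrow> 'a gtree \<Rightarrow> 'a gtree \<Rightarrow> 'a gtree set" where
  "ginterval G ar s t = {u. gtree_wf G ar u \<and> gprefix G ar s u \<and> gprefix G ar u t}"

definition interval_iso :: "'a set \<Rightarrow> ('a \<Rightarrow> nat) \<Rightarrow> 'a gtree set \<Rightarrow> 'a gtree set \<Rightarrow> bool" where
  "interval_iso G ar I J \<longleftrightarrow>
     (\<exists>f. bij_betw f I J \<and> (\<forall>x\<in>I. \<forall>y\<in>I. gprefix G ar x y \<longleftrightarrow> gprefix G ar (f x) (f y)))"

text \<open>Shadows: finite multisets of shadows (nonplanar undecorated rooted trees).\<close>
datatype shadow = Sh "shadow multiset"

text \<open>sh(t) for a non-leaf tree t: multiset of the shadows of the non-leaf root subtrees.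
(The value at the leaf is irrelevant; it is never used below.)\<close>
fun sh :: "'a gtree \<Rightarrow> shadow" where
  "sh Leaf = Sh {#}"
| "sh (Node a ts) = Sh (mset (map sh (filter (\<lambda>t. t \<noteq> Leaf) ts)))"

text \<open>sh(\<lozenge>_k[r_1,...,r_k]): the shadow of the tree with a fresh root of arity k and
subtrees r_1..r_k.  Since sh ignores decorations, this is the multiset of sh(r_i) over the
non-leaf r_i.\<close>
definition sh_diamond :: "'a gtree list \<Rightarrow> shadow" where
  "sh_diamond rs = Sh (mset (map sh (filter (\<lambda>t. t \<noteq> Leaf) rs)))"

end

theory Submission
  imports Defs "HOL-Library.Sublist" "HOL-Combinatorics.Permutations"
begin

text \<open>Address the internal nodes of a tree by their paths from the root. A tree u in the interval
  [s, t] is determined by the set of its positions not in s, and these sets are exactly the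
  down-sets of the poset Y of positions of t not in s, ordered by ancestry; the order of the
  interval is inclusion. A finite poset is recovered from its lattice of down-sets as the poset of
  join-irreducibles, i.e. of principal down-sets, so [s, t] and [s', t'] are isomorphic iff Y and
  Y' are. Finally Y is isomorphic to the forest formed by the trees of the difference t \ s, and
  a finite forest is determined up to isomorphism by the multiset of shadows of its trees, which
  is the shadow of the diamond of t \ s.\<close>

section \<open>Order isomorphisms\<close>

definition order_iso_map ::
    "('a \<Rightarrow> 'a \<Rightarrow> bool) \<Rightarrow> 'a set \<Rightarrow> ('b \<Rightarrow> 'b \<Rightarrow> bool) \<Rightarrow> 'b set \<Rightarrow> ('a \<Rightarrow> 'b) \<Rightarrow> bool" where
  "order_iso_map R A S B f \<longleftrightarrow> bij_betw f A B \<and> (\<forall>x\<in>A. \<forall>y\<in>A. R x y \<longleftrightarrow> S (f x) (f y))"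

definition order_isomorphic ::
    "('a \<Rightarrow> 'a \<Rightarrow> bool) \<Rightarrow> 'a set \<Rightarrow> ('b \<Rightarrow> 'b \<Rightarrow> bool) \<Rightarrow> 'b set \<Rightarrow> bool" where
  "order_isomorphic R A S B \<longleftrightarrow> (\<exists>f. order_iso_map R A S B f)"

lemma order_iso_mapD:
  assumes "order_iso_map R A S B f"
  shows "bij_betw f A B" and "x \<in> A \<Longrightarrow> f x \<in> B"
    and "x \<in> A \<Longrightarrow> y \<in> A \<Longrightarrow> R x y \<longleftrightarrow> S (f x) (f y)"
  using assms by (auto simp: order_iso_map_def bij_betw_apply)

lemma order_iso_map_inv_into:
  assumes "order_iso_map R A S B f"
  shows "order_iso_map S B R A (inv_into A f)"
proof -
  have bij: "bij_betw f A B" using assms by (rule order_iso_mapD)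
  have "S x y \<longleftrightarrow> R (inv_into A f x) (inv_into A f y)" if "x \<in> B" "y \<in> B" for x y
    using that order_iso_mapD(3)[OF assms, of "inv_into A f x" "inv_into A f y"]
      bij_betw_inv_into_right[OF bij] bij_betw_apply[OF bij_betw_inv_into[OF bij]] by auto
  then show ?thesis
    unfolding order_iso_map_def using bij_betw_inv_into[OF bij] by blast
qed

lemma order_iso_map_comp:
  assumes "order_iso_map R A S B f" and "order_iso_map S B T C g"
  shows "order_iso_map R A T C (g \<circ> f)"
  using bij_betw_trans[OF order_iso_mapD(1)[OF assms(1)] order_iso_mapD(1)[OF assms(2)]]
    order_iso_mapD(2,3)[OF assms(1)] order_iso_mapD(3)[OF assms(2)]
  by (auto simp: order_iso_map_def)

lemma order_iso_map_restrict:
  "order_iso_map R A S B f \<Longrightarrow> A' \<subseteq> A \<Longrightarrow> order_iso_map R A' S (f ` A') f"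
  unfolding order_iso_map_def bij_betw_def by (auto intro: inj_on_subset)

lemma order_isomorphic_refl: "order_isomorphic R A R A"
  unfolding order_isomorphic_def order_iso_map_def by (auto intro: exI[of _ id])

lemma order_isomorphic_sym: "order_isomorphic R A S B \<Longrightarrow> order_isomorphic S B R A"
  unfolding order_isomorphic_def by (blast intro: order_iso_map_inv_into)

lemma order_isomorphic_trans [trans]:
  "order_isomorphic R A S B \<Longrightarrow> order_isomorphic S B T C \<Longrightarrow> order_isomorphic R A T C"
  unfolding order_isomorphic_def by (blast intro: order_iso_map_comp)

lemma order_isomorphic_image:
  "inj_on f A \<Longrightarrow> (\<And>x y. x \<in> A \<Longrightarrow> y \<in> A \<Longrightarrow> R x y \<longleftrightarrow> S (f x) (f y))
    \<Longrightarrow> order_isomorphic R A S (f ` A)"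
  unfolding order_isomorphic_def order_iso_map_def bij_betw_def by blast

lemma order_isomorphic_cong:
  assumes "order_isomorphic R A T C" and "order_isomorphic S B T' D"
  shows "order_isomorphic R A S B \<longleftrightarrow> order_isomorphic T C T' D"
  using assms by (meson order_isomorphic_sym order_isomorphic_trans)

definition incomparable :: "('a \<Rightarrow> 'a \<Rightarrow> bool) \<Rightarrow> 'a set \<Rightarrow> 'a set \<Rightarrow> bool" where
  "incomparable R A B \<longleftrightarrow> (\<forall>x\<in>A. \<forall>y\<in>B. \<not> R x y \<and> \<not> R y x)"

context order
begin

lemma order_isomorphic_image_embedding:
  assumes "\<And>x y. x \<in> A \<Longrightarrow> y \<in> A \<Longrightarrow> x \<le> y \<longleftrightarrow> f x \<le> f y"
  shows "order_isomorphic (\<le>) A (\<le>) (f ` A)"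
proof (rule order_isomorphic_image)
  show "inj_on f A"
  proof (rule inj_onI)
    fix x y assume "x \<in> A" "y \<in> A" "f x = f y"
    then have "x \<le> y" "y \<le> x"
      using assms by simp_all
    then show "x = y" by (rule order.antisym)
  qed
qed (rule assms)

lemma order_isomorphic_Un:
  assumes "order_isomorphic (\<le>) A (\<le>) B" and "order_isomorphic (\<le>) A' (\<le>) B'"
    and "incomparable (\<le>) A A'" and "incomparable (\<le>) B B'"
  shows "order_isomorphic (\<le>) (A \<union> A') (\<le>) (B \<union> B')"
proof -
  obtain f f' where f: "order_iso_map (\<le>) A (\<le>) B f" and f': "order_iso_map (\<le>) A' (\<le>) B' f'"
    using assms(1,2) unfolding order_isomorphic_def by blast
  let ?h = "\<lambda>x. if x \<in> A then f x else f' x"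
  have "A \<inter> A' = {}" "B \<inter> B' = {}"
    using assms(3,4) by (auto simp: incomparable_def)
  then have "bij_betw ?h (A \<union> A') (B \<union> B')"
    by (rule bij_betw_disjoint_Un[OF order_iso_mapD(1)[OF f] order_iso_mapD(1)[OF f']])
  moreover have "x \<le> y \<longleftrightarrow> ?h x \<le> ?h y" if "x \<in> A \<union> A'" "y \<in> A \<union> A'" for x y
  proof (cases "x \<in> A"; cases "y \<in> A")
    assume "x \<in> A" "y \<in> A"
    then show ?thesis using order_iso_mapD(3)[OF f] by simp
  next
    assume "x \<notin> A" "y \<notin> A"
    then show ?thesis using that order_iso_mapD(3)[OF f'] by simp
  next
    assume "x \<in> A" "y \<notin> A"
    then show ?thesis
      using that assms(3,4) order_iso_mapD(2)[OF f] order_iso_mapD(2)[OF f']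
      by (simp add: incomparable_def)
  next
    assume "x \<notin> A" "y \<in> A"
    then show ?thesis
      using that assms(3,4) order_iso_mapD(2)[OF f] order_iso_mapD(2)[OF f']
      by (simp add: incomparable_def)
  qed
  ultimately show ?thesis
    unfolding order_isomorphic_def order_iso_map_def by blast
qed

lemma order_isomorphic_insert_least:
  assumes "order_isomorphic (\<le>) A (\<le>) B" and "a \<notin> A" "b \<notin> B"
    and "\<forall>x\<in>A. a \<le> x" "\<forall>y\<in>B. b \<le> y"
  shows "order_isomorphic (\<le>) (insert a A) (\<le>) (insert b B)"
proof -
  obtain f where f: "order_iso_map (\<le>) A (\<le>) B f"
    using assms(1) unfolding order_isomorphic_def by blast
  let ?g = "f(a := b)"
  have "f ` A = B"
    using order_iso_mapD(1)[OF f] by (simp add: bij_betw_def)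
  moreover have "?g ` A = f ` A"
    using assms(2) by (intro image_cong) auto
  ultimately have image: "?g ` insert a A = insert b B"
    by (metis image_insert fun_upd_same)
  have not_below: "\<not> x \<le> a" "\<not> f x \<le> b" if "x \<in> A" for x
    using that assms(2-5) order_iso_mapD(2)[OF f] order.antisym by blast+
  have "x \<le> y \<longleftrightarrow> ?g x \<le> ?g y" if "x \<in> insert a A" "y \<in> insert a A" for x y
    using that assms(2,4) not_below order_iso_mapD(2,3)[OF f] assms(5)
    by (cases "x = a"; cases "y = a") auto
  then have "order_isomorphic (\<le>) (insert a A) (\<le>) (?g ` insert a A)"
    by (rule order_isomorphic_image_embedding)
  then show ?thesis
    unfolding image .
qed

end

section \<open>Down-sets and join-irreducibles\<close>

definition down_sets :: "('a \<Rightarrow> 'a \<Rightarrow> bool) \<Rightarrow> 'a set \<Rightarrow> 'a set set" where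
  "down_sets R Y = {D. D \<subseteq> Y \<and> (\<forall>p\<in>D. \<forall>q\<in>Y. R q p \<longrightarrow> q \<in> D)}"

lemma order_isomorphic_down_sets:
  assumes "order_isomorphic R Y S Y'"
  shows "order_isomorphic (\<subseteq>) (down_sets R Y) (\<subseteq>) (down_sets S Y')"
proof -
  from assms obtain f where f: "order_iso_map R Y S Y' f"
    unfolding order_isomorphic_def by blast
  have inj: "inj_on f Y" and im: "f ` Y = Y'"
    using order_iso_mapD(1)[OF f] by (auto simp: bij_betw_def)
  have "image f ` down_sets R Y = down_sets S Y'"
  proof
    show "image f ` down_sets R Y \<subseteq> down_sets S Y'"
      using im order_iso_mapD(3)[OF f] unfolding down_sets_def by fastforce
    show "down_sets S Y' \<subseteq> image f ` down_sets R Y"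
    proof
      fix E assume E: "E \<in> down_sets S Y'"
      then have "{x\<in>Y. f x \<in> E} \<in> down_sets R Y" and "f ` {x\<in>Y. f x \<in> E} = E"
        using im order_iso_mapD(3)[OF f] unfolding down_sets_def by auto
      then show "E \<in> image f ` down_sets R Y" by blast
    qed
  qed
  moreover have "inj_on (image f) (down_sets R Y)"
    using inj by (auto simp: inj_on_def down_sets_def inj_on_image_eq_iff)
  moreover have "D \<subseteq> E \<longleftrightarrow> f ` D \<subseteq> f ` E" if "D \<in> down_sets R Y" "E \<in> down_sets R Y" for D E
    using that inj_on_image_mem_iff[OF inj]
    by (auto simp: down_sets_def) (metis image_eqI subsetD)
  ultimately show ?thesis
    using order_isomorphic_image[of "image f" "down_sets R Y" "(\<subseteq>)" "(\<subseteq>)"] by metis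
qed

text \<open>In a finite lattice of sets these are exactly the join-irreducible elements.\<close>
definition join_irreducibles :: "'a set set \<Rightarrow> 'a set set" where
  "join_irreducibles L = {D\<in>L. \<exists>E\<in>L. E \<subset> D \<and> (\<forall>Z\<in>L. Z \<subset> D \<longrightarrow> Z \<subseteq> E)}"

lemma order_iso_map_join_irreducibles:
  assumes h: "order_iso_map (\<subseteq>) L (\<subseteq>) M h"
  shows "h ` join_irreducibles L \<subseteq> join_irreducibles M"
proof
  fix D' assume "D' \<in> h ` join_irreducibles L"
  then obtain D E where D: "D \<in> L" "D' = h D" and E: "E \<in> L" "E \<subset> D"
    and below_E: "\<forall>Z\<in>L. Z \<subset> D \<longrightarrow> Z \<subseteq> E"
    unfolding join_irreducibles_def by auto
  have iff: "A \<subset> B \<longleftrightarrow> h A \<subset> h B" "A \<subseteq> B \<longleftrightarrow> h A \<subseteq> h B" if "A \<in> L" "B \<in> L" for A B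
    using order_iso_mapD(3)[OF h that] order_iso_mapD(3)[OF h that(2,1)]
    by (simp_all add: less_le_not_le)
  have "\<forall>Z'\<in>M. Z' \<subset> h D \<longrightarrow> Z' \<subseteq> h E"
  proof (intro ballI impI)
    fix Z' assume Z': "Z' \<in> M" "Z' \<subset> h D"
    obtain Z where Z: "Z \<in> L" "Z' = h Z"
      using Z'(1) order_iso_mapD(1)[OF h] by (auto simp: bij_betw_def)
    then show "Z' \<subseteq> h E"
      using Z'(2) below_E Z iff[OF Z(1) D(1)] iff[OF Z(1) E(1)] by simp
  qed
  moreover have "h D \<in> M" "h E \<in> M" "h E \<subset> h D"
    using D E order_iso_mapD(2)[OF h] iff by simp_all
  ultimately show "D' \<in> join_irreducibles M"
    unfolding join_irreducibles_def D(2) by (intro CollectI conjI bexI[of _ "h E"])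
qed

lemma join_irreducibles_subset: "join_irreducibles L \<subseteq> L"
  unfolding join_irreducibles_def by (rule Collect_subset)

lemma order_isomorphic_join_irreducibles:
  assumes "order_isomorphic (\<subseteq>) L (\<subseteq>) M"
  shows "order_isomorphic (\<subseteq>) (join_irreducibles L) (\<subseteq>) (join_irreducibles M)"
proof -
  from assms obtain h where h: "order_iso_map (\<subseteq>) L (\<subseteq>) M h"
    unfolding order_isomorphic_def by blast
  have "join_irreducibles M \<subseteq> h ` join_irreducibles L"
  proof
    fix D' assume D': "D' \<in> join_irreducibles M"
    then have "D' \<in> h ` L"
      using join_irreducibles_subset bij_betw_imp_surj_on[OF order_iso_mapD(1)[OF h]] by blast
    then have "h (inv_into L h D') = D'"
      by (rule f_inv_into_f)
    moreover have "inv_into L h D' \<in> join_irreducibles L"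
      using order_iso_map_join_irreducibles[OF order_iso_map_inv_into[OF h]] D' by blast
    ultimately show "D' \<in> h ` join_irreducibles L"
      by (metis image_eqI)
  qed
  then have "h ` join_irreducibles L = join_irreducibles M"
    using order_iso_map_join_irreducibles[OF h] by (rule subset_antisym[rotated])
  moreover have "order_iso_map (\<subseteq>) (join_irreducibles L) (\<subseteq>) (h ` join_irreducibles L) h"
    using order_iso_map_restrict[OF h join_irreducibles_subset] .
  ultimately show ?thesis
    unfolding order_isomorphic_def by auto
qed

context order
begin

lemma principal_down_set: "{q\<in>Y. q \<le> y} \<in> down_sets (\<le>) Y"
  unfolding down_sets_def by (blast intro: order_trans)

lemma order_isomorphic_principal_down_sets:
  "order_isomorphic (\<le>) Y (\<subseteq>) ((\<lambda>y. {q\<in>Y. q \<le> y}) ` Y)"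
proof (rule order_isomorphic_image)
  have mono_iff: "{q\<in>Y. q \<le> x} \<subseteq> {q\<in>Y. q \<le> y} \<longleftrightarrow> x \<le> y" if "x \<in> Y" for x y
    using that by (blast intro: order_trans)
  then show "x \<le> y \<longleftrightarrow> {q\<in>Y. q \<le> x} \<subseteq> {q\<in>Y. q \<le> y}" if "x \<in> Y" for x y
    using that by blast
  show "inj_on (\<lambda>y. {q\<in>Y. q \<le> y}) Y"
  proof (rule inj_onI)
    fix x y assume "x \<in> Y" "y \<in> Y" "{q\<in>Y. q \<le> x} = {q\<in>Y. q \<le> y}"
    then have "x \<le> y" and "y \<le> x"
      using mono_iff by blast+
    then show "x = y" by (rule order.antisym)
  qed
qed

lemma principal_down_set_in_join_irreducibles:
  assumes "y \<in> Y"
  shows "{q\<in>Y. q \<le> y} \<in> join_irreducibles (down_sets (\<le>) Y)"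
proof -
  let ?D = "{q\<in>Y. q \<le> y}"
  have "?D - {y} \<in> down_sets (\<le>) Y"
    unfolding down_sets_def
  proof (intro CollectI conjI ballI impI)
    fix p q assume p: "p \<in> ?D - {y}" and "q \<in> Y" "q \<le> p"
    moreover have "q \<noteq> y"
      using p \<open>q \<le> p\<close> order.antisym by auto
    ultimately show "q \<in> ?D - {y}"
      using order.trans by auto
  qed auto
  moreover have "?D - {y} \<subset> ?D"
    using assms by auto
  moreover have "\<forall>Z\<in>down_sets (\<le>) Y. Z \<subset> ?D \<longrightarrow> Z \<subseteq> ?D - {y}"
  proof (intro ballI impI)
    fix Z assume Z: "Z \<in> down_sets (\<le>) Y" "Z \<subset> ?D"
    have "y \<notin> Z"
    proof
      assume "y \<in> Z"
      then have "?D \<subseteq> Z"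
        using Z(1) by (auto simp: down_sets_def)
      then show False
        using Z(2) by auto
    qed
    then show "Z \<subseteq> ?D - {y}"
      using Z(2) by auto
  qed
  ultimately show ?thesis
    unfolding join_irreducibles_def
    by (intro CollectI conjI bexI[of _ "?D - {y}"] principal_down_set)
qed

lemma join_irreducible_down_set_principal:
  assumes "finite Y" and "D \<in> join_irreducibles (down_sets (\<le>) Y)"
  obtains y where "y \<in> Y" and "D = {q\<in>Y. q \<le> y}"
proof -
  obtain E where D: "D \<in> down_sets (\<le>) Y" and E: "E \<subset> D"
    and below_E: "\<forall>Z\<in>down_sets (\<le>) Y. Z \<subset> D \<longrightarrow> Z \<subseteq> E"
    using assms(2) unfolding join_irreducibles_def by auto
  have "finite D" "D \<noteq> {}"
    using D E assms(1) by (auto simp: down_sets_def intro: finite_subset)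
  then obtain y where y: "y \<in> D" and y_max: "\<forall>b\<in>D. y \<le> b \<longrightarrow> y = b"
    using finite_has_maximal by blast
  have yY: "y \<in> Y"
    using D y by (auto simp: down_sets_def)
  have "D - {y} \<in> down_sets (\<le>) Y"
    using D y_max by (auto simp: down_sets_def)
  moreover have "D - {y} \<subset> D"
    using y by auto
  ultimately have "D - {y} \<subseteq> E"
    using below_E by simp
  then have "y \<notin> E"
    using E by auto
  then have "\<not> {q\<in>Y. q \<le> y} \<subset> D"
    using below_E principal_down_set yY by auto
  moreover have "{q\<in>Y. q \<le> y} \<subseteq> D"
    using D y by (auto simp: down_sets_def)
  ultimately show ?thesis
    using that yY by auto
qed

lemma join_irreducibles_down_sets:
  "finite Y \<Longrightarrow> join_irreducibles (down_sets (\<le>) Y) = (\<lambda>y. {q\<in>Y. q \<le> y}) ` Y"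
  by (auto intro: principal_down_set_in_join_irreducibles elim: join_irreducible_down_set_principal)

theorem order_isomorphic_down_sets_iff:
  assumes "finite Y" and "finite Y'"
  shows "order_isomorphic (\<subseteq>) (down_sets (\<le>) Y) (\<subseteq>) (down_sets (\<le>) Y')
    \<longleftrightarrow> order_isomorphic (\<le>) Y (\<le>) Y'"
proof
  assume "order_isomorphic (\<subseteq>) (down_sets (\<le>) Y) (\<subseteq>) (down_sets (\<le>) Y')"
  then have "order_isomorphic (\<subseteq>) (join_irreducibles (down_sets (\<le>) Y))
      (\<subseteq>) (join_irreducibles (down_sets (\<le>) Y'))"
    by (rule order_isomorphic_join_irreducibles)
  then have "order_isomorphic (\<subseteq>) ((\<lambda>y. {q\<in>Y. q \<le> y}) ` Y) (\<subseteq>) ((\<lambda>y. {q\<in>Y'. q \<le> y}) ` Y')"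
    by (simp add: join_irreducibles_down_sets assms)
  then show "order_isomorphic (\<le>) Y (\<le>) Y'"
    using order_isomorphic_cong order_isomorphic_principal_down_sets by blast
qed (rule order_isomorphic_down_sets)

end

section \<open>Shadows of finite forests\<close>

definition minimals :: "('a \<Rightarrow> 'a \<Rightarrow> bool) \<Rightarrow> 'a set \<Rightarrow> 'a set" where
  "minimals R A = {m\<in>A. \<forall>y\<in>A. R y m \<longrightarrow> y = m}"

definition strictly_above :: "('a \<Rightarrow> 'a \<Rightarrow> bool) \<Rightarrow> 'a set \<Rightarrow> 'a \<Rightarrow> 'a set" where
  "strictly_above R A m = {y\<in>A. R m y \<and> y \<noteq> m}"

declare image_mset_cong [fundef_cong]

text \<open>For a finite forest ordered by ancestry, this is the multiset of the shadows of its trees.\<close>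
function forest_shadow :: "('a \<Rightarrow> 'a \<Rightarrow> bool) \<Rightarrow> 'a set \<Rightarrow> shadow multiset" where
  "forest_shadow R A =
    (if finite A
     then image_mset (\<lambda>m. Sh (forest_shadow R (strictly_above R A m))) (mset_set (minimals R A))
     else {#})"
  by auto
termination
proof (relation "measure (\<lambda>(R, A). card A)")
  fix R A m assume "finite A" "m \<in># mset_set (minimals R A)"
  then have "strictly_above R A m \<subset> A"
    by (auto simp: minimals_def strictly_above_def)
  then show "((R, strictly_above R A m), (R, A)) \<in> measure (\<lambda>(R, A). card A)"
    using \<open>finite A\<close> by (simp add: psubset_card_mono)
qed auto

declare forest_shadow.simps [simp del]

lemma forest_shadow_finite:
  "finite A \<Longrightarrow> forest_shadow R A =
    image_mset (\<lambda>m. Sh (forest_shadow R (strictly_above R A m))) (mset_set (minimals R A))"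
  by (simp add: forest_shadow.simps)

lemma forest_shadow_empty [simp]: "forest_shadow R {} = {#}"
  by (simp add: forest_shadow.simps minimals_def)

lemma minimals_subset: "minimals R A \<subseteq> A"
  by (auto simp: minimals_def)

lemma finite_minimals: "finite A \<Longrightarrow> finite (minimals R A)"
  by (simp add: minimals_def)

lemma order_iso_map_minimals:
  assumes f: "order_iso_map R A S B f"
  shows "f ` minimals R A = minimals S B"
proof -
  have B: "B = f ` A" and inj: "inj_on f A"
    using order_iso_mapD(1)[OF f] by (auto simp: bij_betw_def)
  show ?thesis
    unfolding minimals_def B using order_iso_mapD(3)[OF f] inj_on_eq_iff[OF inj] by auto
qed

lemma order_iso_map_strictly_above:
  assumes f: "order_iso_map R A S B f" and "m \<in> A"
  shows "f ` strictly_above R A m = strictly_above S B (f m)"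
proof -
  have B: "B = f ` A" and inj: "inj_on f A"
    using order_iso_mapD(1)[OF f] by (auto simp: bij_betw_def)
  show ?thesis
    unfolding strictly_above_def B using order_iso_mapD(3)[OF f] inj_on_eq_iff[OF inj] \<open>m \<in> A\<close>
    by auto
qed

lemma order_iso_map_forest_shadow:
  "finite A \<Longrightarrow> order_iso_map R A S B f \<Longrightarrow> forest_shadow R A = forest_shadow S B"
proof (induction "card A" arbitrary: A B f rule: less_induct)
  case less
  note f = \<open>order_iso_map R A S B f\<close>
  have inj: "inj_on f A" and "finite B"
    using order_iso_mapD(1)[OF f] less.prems(1) bij_betw_finite by (auto simp: bij_betw_def)
  have IH: "forest_shadow R (strictly_above R A m) = forest_shadow S (strictly_above S B (f m))"
    if "m \<in> minimals R A" for m
  proof (rule less.hyps)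
    have "m \<in> A" using that by (simp add: minimals_def)
    then have sub: "strictly_above R A m \<subset> A"
      by (auto simp: strictly_above_def)
    then show "card (strictly_above R A m) < card A" "finite (strictly_above R A m)"
      using less.prems(1) by (auto intro: psubset_card_mono finite_subset)
    show "order_iso_map R (strictly_above R A m) S (strictly_above S B (f m)) f"
      using order_iso_map_restrict[OF f] sub order_iso_map_strictly_above[OF f \<open>m \<in> A\<close>]
      by (metis psubset_imp_subset)
  qed
  have "inj_on f (minimals R A)"
    using inj by (rule inj_on_subset) (auto simp: minimals_def)
  then have minimals_B: "mset_set (minimals S B) = image_mset f (mset_set (minimals R A))"
    by (simp add: image_mset_mset_set order_iso_map_minimals[OF f])
  have "forest_shadow S B
      = image_mset (\<lambda>m. Sh (forest_shadow S (strictly_above S B (f m)))) (mset_set (minimals R A))"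
    by (simp add: forest_shadow_finite[OF \<open>finite B\<close>] minimals_B multiset.map_comp comp_def)
  also have "\<dots> = image_mset (\<lambda>m. Sh (forest_shadow R (strictly_above R A m))) (mset_set (minimals R A))"
    using IH finite_minimals[OF less.prems(1)] by (intro image_mset_cong) simp
  also have "\<dots> = forest_shadow R A"
    by (rule forest_shadow_finite[symmetric, OF less.prems(1)])
  finally show ?case ..
qed

lemma order_isomorphic_forest_shadow:
  "finite A \<Longrightarrow> order_isomorphic R A S B \<Longrightarrow> forest_shadow R A = forest_shadow S B"
  unfolding order_isomorphic_def using order_iso_map_forest_shadow by blast

context order
begin

lemma forest_shadow_Un:
  assumes "finite A" "finite B" "incomparable (\<le>) A B"
  shows "forest_shadow (\<le>) (A \<union> B) = forest_shadow (\<le>) A + forest_shadow (\<le>) B"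
proof -
  let ?sh = "\<lambda>C m. Sh (forest_shadow (\<le>) (strictly_above (\<le>) C m))"
  have "A \<inter> B = {}"
    using assms(3) by (auto simp: incomparable_def)
  then have disj: "minimals (\<le>) A \<inter> minimals (\<le>) B = {}"
    using minimals_subset[of "(\<le>)" A] minimals_subset[of "(\<le>)" B] by blast
  have fin: "finite (minimals (\<le>) A)" "finite (minimals (\<le>) B)"
    using assms(1,2) by (simp_all add: finite_minimals)
  have "minimals (\<le>) (A \<union> B) = minimals (\<le>) A \<union> minimals (\<le>) B"
    using assms(3) by (auto simp: minimals_def incomparable_def)
  then have "forest_shadow (\<le>) (A \<union> B)
      = image_mset (?sh (A \<union> B)) (mset_set (minimals (\<le>) A))
      + image_mset (?sh (A \<union> B)) (mset_set (minimals (\<le>) B))"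
    using assms(1,2) by (simp add: forest_shadow_finite mset_set_Union[OF fin disj])
  also have "image_mset (?sh (A \<union> B)) (mset_set (minimals (\<le>) A))
      = image_mset (?sh A) (mset_set (minimals (\<le>) A))"
  proof (rule image_mset_cong)
    fix m assume "m \<in># mset_set (minimals (\<le>) A)"
    then have "m \<in> A"
      using fin(1) minimals_subset by fastforce
    then have "strictly_above (\<le>) (A \<union> B) m = strictly_above (\<le>) A m"
      using assms(3) by (auto simp: strictly_above_def incomparable_def)
    then show "?sh (A \<union> B) m = ?sh A m"
      by simp
  qed
  also have "image_mset (?sh (A \<union> B)) (mset_set (minimals (\<le>) B))
      = image_mset (?sh B) (mset_set (minimals (\<le>) B))"
  proof (rule image_mset_cong)
    fix m assume "m \<in># mset_set (minimals (\<le>) B)"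
    then have "m \<in> B"
      using fin(2) minimals_subset by fastforce
    then have "strictly_above (\<le>) (A \<union> B) m = strictly_above (\<le>) B m"
      using assms(3) by (auto simp: strictly_above_def incomparable_def)
    then show "?sh (A \<union> B) m = ?sh B m"
      by simp
  qed
  also have "image_mset (?sh A) (mset_set (minimals (\<le>) A))
      + image_mset (?sh B) (mset_set (minimals (\<le>) B))
      = forest_shadow (\<le>) A + forest_shadow (\<le>) B"
    by (simp only: forest_shadow_finite[OF assms(1)] forest_shadow_finite[OF assms(2)])
  finally show ?thesis .
qed

lemma forest_shadow_least:
  assumes "finite A" "b \<in> A" "\<forall>y\<in>A. b \<le> y"
  shows "forest_shadow (\<le>) A = {# Sh (forest_shadow (\<le>) (A - {b})) #}"
proof -
  have "minimals (\<le>) A = {b}"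
    using assms(2,3) order.antisym by (auto simp: minimals_def)
  moreover have "strictly_above (\<le>) A b = A - {b}"
    using assms(3) by (auto simp: strictly_above_def)
  ultimately show ?thesis
    using forest_shadow_finite[OF assms(1)] by simp
qed

end

section \<open>Prefixes and differences of trees\<close>

function tree_prefix :: "'a gtree \<Rightarrow> 'a gtree \<Rightarrow> bool" where
  "tree_prefix Leaf v \<longleftrightarrow> True"
| "tree_prefix (Node a us) Leaf \<longleftrightarrow> False"
| "tree_prefix (Node a us) (Node b vs) \<longleftrightarrow>
     a = b \<and> length us = length vs \<and> (\<forall>i<length us. tree_prefix (us ! i) (vs ! i))"
  by pat_completeness auto
termination
  by (relation "measure (size \<circ> fst)")
     (auto simp: size_list_estimation' intro: size_list_estimation' [OF nth_mem] less_le_trans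
           dest!: nth_mem)

function tree_diff :: "'a gtree \<Rightarrow> 'a gtree \<Rightarrow> 'a gtree list" where
  "tree_diff Leaf v = [v]"
| "tree_diff (Node a us) Leaf = []"
| "tree_diff (Node a us) (Node b vs) = concat (map (\<lambda>i. tree_diff (us ! i) (vs ! i)) [0..<length us])"
  by pat_completeness auto
termination
  by (relation "measure (size \<circ> fst)")
     (auto simp: size_list_estimation' intro: size_list_estimation' [OF nth_mem] less_le_trans
           dest!: nth_mem)

lemma tree_prefix_NodeE:
  assumes "tree_prefix (Node a us) v"
  obtains vs where "v = Node a vs" "length vs = length us"
    and "\<forall>i<length us. tree_prefix (us ! i) (vs ! i)"
  using assms by (cases v) auto

lemma tree_prefix_antisym: "tree_prefix u v \<Longrightarrow> tree_prefix v u \<Longrightarrow> u = v"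
proof (induction u arbitrary: v)
  case Leaf
  then show ?case by (cases v) simp_all
next
  case (Node a us)
  then obtain vs where v: "v = Node a vs" "length vs = length us"
    by (auto elim: tree_prefix_NodeE)
  have "us ! i = vs ! i" if "i < length us" for i
    by (rule Node.IH) (use that v Node.prems in auto)
  then show ?case
    using v by (simp add: list_eq_iff_nth_eq)
qed

lemma map_nth_upt: "map (\<lambda>i. f (xs ! i)) [0..<length xs] = map f xs"
  using map_map[of f "(!) xs" "[0..<length xs]"] by (simp add: map_nth comp_def)

lemma length_chunks_nth:
  "sum_list ns \<le> length xs \<Longrightarrow> i < length ns \<Longrightarrow> length (chunks ns xs ! i) = ns ! i"
proof (induction ns arbitrary: xs i)
  case (Cons n ns)
  then show ?case by (cases i) auto
qed simp

lemma set_chunks_nth: "i < length ns \<Longrightarrow> set (chunks ns xs ! i) \<subseteq> set xs"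
proof (induction ns arbitrary: xs i)
  case (Cons n ns)
  then show ?case by (cases i) (auto dest: in_set_takeD in_set_dropD)
qed simp

lemma concat_chunks: "sum_list ns = length xs \<Longrightarrow> concat (chunks ns xs) = xs"
  by (induction ns arbitrary: xs) auto

lemma chunks_concat: "chunks (map length xss) (concat xss) = xss"
  by (induction xss) auto

lemma length_chunks_nleaves:
  "length rs = nleaves (Node a ts) \<Longrightarrow> i < length ts
    \<Longrightarrow> length (chunks (map nleaves ts) rs ! i) = nleaves (ts ! i)"
  by (simp add: length_chunks_nth)

lemma tree_prefix_graft: "length rs = nleaves u \<Longrightarrow> tree_prefix u (graft u rs)"
proof (induction u arbitrary: rs)
  case (Node a ts)
  then show ?case
    by (simp add: length_chunks_nleaves)
qed simp

lemma gtree_wf_graft: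
  "gtree_wf G ar u \<Longrightarrow> length rs = nleaves u \<Longrightarrow> \<forall>r\<in>set rs. gtree_wf G ar r
    \<Longrightarrow> gtree_wf G ar (graft u rs)"
proof (induction u arbitrary: rs)
  case Leaf
  then show ?case by (cases rs) auto
next
  case (Node a ts)
  have "gtree_wf G ar (graft (ts ! i) (chunks (map nleaves ts) rs ! i))" if "i < length ts" for i
    using Node that set_chunks_nth[of i "map nleaves ts" rs]
    by (intro Node.IH) (auto simp: length_chunks_nleaves)
  then show ?case
    using Node.prems(1) by (auto simp: in_set_conv_nth)
qed

lemma length_tree_diff: "tree_prefix u v \<Longrightarrow> length (tree_diff u v) = nleaves u"
proof (induction u arbitrary: v)
  case (Node a us)
  then obtain vs where v: "v = Node a vs" "length vs = length us"
    "\<forall>i<length us. tree_prefix (us ! i) (vs ! i)"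
    by (auto elim: tree_prefix_NodeE)
  have "map (\<lambda>i. length (tree_diff (us ! i) (vs ! i))) [0..<length us]
      = map (\<lambda>i. nleaves (us ! i)) [0..<length us]"
    using Node.IH v by simp
  then show ?case
    using v by (simp add: length_concat comp_def map_nth_upt)
qed simp

lemma graft_tree_diff: "tree_prefix u v \<Longrightarrow> graft u (tree_diff u v) = v"
proof (induction u arbitrary: v)
  case (Node a us)
  then obtain vs where v: "v = Node a vs" "length vs = length us"
    "\<forall>i<length us. tree_prefix (us ! i) (vs ! i)"
    by (auto elim: tree_prefix_NodeE)
  let ?rss = "map (\<lambda>i. tree_diff (us ! i) (vs ! i)) [0..<length us]"
  have "map length ?rss = map nleaves us"
    using v length_tree_diff by (intro nth_equalityI) auto
  then have "chunks (map nleaves us) (concat ?rss) = ?rss"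
    using chunks_concat[of ?rss] by simp
  moreover have "map (\<lambda>i. graft (us ! i) (?rss ! i)) [0..<length us] = vs"
    using Node.IH v by (intro nth_equalityI) simp_all
  ultimately show ?case
    using v by simp
qed simp

lemma gtree_wf_tree_diff:
  "tree_prefix u v \<Longrightarrow> gtree_wf G ar v \<Longrightarrow> r \<in> set (tree_diff u v) \<Longrightarrow> gtree_wf G ar r"
proof (induction u arbitrary: v)
  case (Node a us)
  then obtain vs where v: "v = Node a vs" "length vs = length us"
    "\<forall>i<length us. tree_prefix (us ! i) (vs ! i)"
    by (auto elim: tree_prefix_NodeE)
  with Node.prems(3) obtain i where "i < length us" "r \<in> set (tree_diff (us ! i) (vs ! i))"
    by auto
  then show ?case
    using v Node.prems(2) by (intro Node.IH[of "us ! i" "vs ! i"]) auto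
qed simp

lemma tree_diff_graft: "length rs = nleaves u \<Longrightarrow> tree_diff u (graft u rs) = rs"
proof (induction u arbitrary: rs)
  case Leaf
  then show ?case by (cases rs) auto
next
  case (Node a ts)
  let ?rss = "chunks (map nleaves ts) rs"
  let ?ts' = "map (\<lambda>i. graft (ts ! i) (?rss ! i)) [0..<length ts]"
  have "map (\<lambda>i. tree_diff (ts ! i) (?ts' ! i)) [0..<length ts] = ?rss"
    using Node by (intro nth_equalityI) (simp_all add: length_chunks_nleaves)
  then show ?case
    using Node.prems concat_chunks[of "map nleaves ts" rs] by simp
qed

lemma gprefix_iff_tree_prefix:
  "gtree_wf G ar u \<Longrightarrow> gprefix G ar u v \<longleftrightarrow> gtree_wf G ar v \<and> tree_prefix u v"
proof
  assume "gtree_wf G ar u" "gprefix G ar u v"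
  then show "gtree_wf G ar v \<and> tree_prefix u v"
    unfolding gprefix_def using gtree_wf_graft tree_prefix_graft by blast
next
  assume "gtree_wf G ar v \<and> tree_prefix u v"
  then show "gprefix G ar u v"
    unfolding gprefix_def
    by (intro exI[of _ "tree_diff u v"])
       (auto simp: length_tree_diff graft_tree_diff intro: gtree_wf_tree_diff)
qed

lemma tdiff_eq_tree_diff:
  assumes "tree_prefix s t" and "gtree_wf G ar t"
  shows "tdiff G ar t s = tree_diff s t"
  unfolding tdiff_def
proof (rule the_equality)
  show "length (tree_diff s t) = nleaves s \<and> (\<forall>r\<in>set (tree_diff s t). gtree_wf G ar r)
      \<and> t = graft s (tree_diff s t)"
    using assms by (auto simp: length_tree_diff graft_tree_diff intro: gtree_wf_tree_diff)
qed (auto simp: tree_diff_graft)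

section \<open>Positions of internal nodes\<close>

text \<open>Internal nodes are addressed by their paths of child indices from the root, so that the
  prefix order on positions is the ancestor order; forest Ps collects the positions of a forest
  whose i-th tree has the positions Ps ! i.\<close>

definition forest :: "nat list set list \<Rightarrow> nat list set" where
  "forest Ps = (\<Union>i<length Ps. (#) i ` (Ps ! i))"

fun positions :: "'a gtree \<Rightarrow> nat list set" where
  "positions Leaf = {}"
| "positions (Node a ts) = insert [] (forest (map positions ts))"

lemma Cons_in_forest [simp]: "i # p \<in> forest Ps \<longleftrightarrow> i < length Ps \<and> p \<in> Ps ! i"
  by (auto simp: forest_def)

lemma Nil_notin_forest [simp]: "[] \<notin> forest Ps"
  by (auto simp: forest_def)

lemma in_forest_iff: "p \<in> forest Ps \<longleftrightarrow> (\<exists>i q. p = i # q \<and> i < length Ps \<and> q \<in> Ps ! i)"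
  by (cases p) auto

lemma finite_forest: "(\<And>P. P \<in> set Ps \<Longrightarrow> finite P) \<Longrightarrow> finite (forest Ps)"
  by (auto simp: forest_def)

lemma finite_positions: "finite (positions t)"
  by (induction t) (auto intro!: finite_forest)

lemma forest_subset_iff:
  "length Ps = length Qs \<Longrightarrow> forest Ps \<subseteq> forest Qs \<longleftrightarrow> (\<forall>i<length Ps. Ps ! i \<subseteq> Qs ! i)"
  by (auto simp: in_forest_iff subset_iff)

lemma positions_prefix_closed: "p \<in> positions t \<Longrightarrow> prefix q p \<Longrightarrow> q \<in> positions t"
proof (induction t arbitrary: p q)
  case (Node a ts)
  show ?case
  proof (cases q)
    case (Cons j q')
    with Node.prems obtain p' where p: "p = j # p'" "prefix q' p'"
      by (cases p) auto
    with Node.prems have "j < length ts" "p' \<in> positions (ts ! j)"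
      by auto
    with Node.IH[of "ts ! j" p' q'] p Cons show ?thesis
      by auto
  qed simp
qed simp

lemma positions_mono: "tree_prefix u v \<Longrightarrow> positions u \<subseteq> positions v"
proof (induction u v rule: tree_prefix.induct)
  case (3 a us b vs)
  then have "forest (map positions us) \<subseteq> forest (map positions vs)"
    by (simp add: forest_subset_iff)
  then show ?case
    by auto
qed auto

lemma tree_prefix_iff_positions_subset:
  "tree_prefix u t \<Longrightarrow> tree_prefix v t \<Longrightarrow> tree_prefix u v \<longleftrightarrow> positions u \<subseteq> positions v"
proof (induction u arbitrary: v t)
  case (Node a us)
  from Node.prems(1) obtain ts where t: "t = Node a ts" "length ts = length us"
    "\<forall>i<length us. tree_prefix (us ! i) (ts ! i)"
    by (auto elim: tree_prefix_NodeE)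
  show ?case
  proof (cases v)
    case (Node b vs)
    with Node.prems(2) t have v: "b = a" "length vs = length us"
      "\<forall>i<length us. tree_prefix (vs ! i) (ts ! i)"
      by auto
    have "tree_prefix (us ! i) (vs ! i) \<longleftrightarrow> positions (us ! i) \<subseteq> positions (vs ! i)"
      if "i < length us" for i
      using that t v by (intro Node.IH[of _ "ts ! i"]) auto
    then show ?thesis
      using v \<open>v = Node b vs\<close> by (simp add: forest_subset_iff subset_insert)
  qed simp
qed simp

lemma positions_inj:
  assumes "tree_prefix u t" "tree_prefix v t" and "positions u = positions v"
  shows "u = v"
proof (rule tree_prefix_antisym)
  show "tree_prefix u v" "tree_prefix v u"
    using tree_prefix_iff_positions_subset[OF assms(1,2)] tree_prefix_iff_positions_subset[OF assms(2,1)]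
      assms(3) by simp_all
qed

function restrict_tree :: "'a gtree \<Rightarrow> nat list set \<Rightarrow> 'a gtree" where
  "restrict_tree Leaf D = Leaf"
| "restrict_tree (Node a ts) D =
     (if [] \<in> D then Node a (map (\<lambda>i. restrict_tree (ts ! i) {p. i # p \<in> D}) [0..<length ts])
      else Leaf)"
  by pat_completeness auto
termination
  by (relation "measure (size \<circ> fst)")
     (auto simp: size_list_estimation' intro: size_list_estimation' [OF nth_mem] less_le_trans
           dest!: nth_mem)

lemma gtree_wf_restrict_tree: "gtree_wf G ar t \<Longrightarrow> gtree_wf G ar (restrict_tree t D)"
proof (induction t arbitrary: D)
  case (Node a ts)
  have "gtree_wf G ar (restrict_tree (ts ! i) {p. i # p \<in> D})" if "i < length ts" for i
    using Node.prems that by (intro Node.IH) auto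
  then show ?case
    using Node.prems by (auto simp: in_set_conv_nth)
qed simp

lemma tree_prefix_restrict_tree: "tree_prefix (restrict_tree t D) t"
  by (induction t arbitrary: D) auto

lemma positions_restrict_tree:
  "\<forall>p\<in>D. \<forall>q\<in>positions t. prefix q p \<longrightarrow> q \<in> D
    \<Longrightarrow> positions (restrict_tree t D) = D \<inter> positions t"
proof (induction t arbitrary: D)
  case (Node a ts)
  show ?case
  proof (cases "[] \<in> D")
    case True
    have "positions (restrict_tree (ts ! i) {p. i # p \<in> D}) = {p. i # p \<in> D} \<inter> positions (ts ! i)"
      if "i < length ts" for i
      using Node.prems that by (intro Node.IH) fastforce+
    then show ?thesis
      using True by (auto simp: in_forest_iff)
  next
    case False
    then show ?thesis
      using Node.prems by fastforce
  qed
qed simp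

section \<open>Intervals of the prefix poset\<close>

lemma interval_iso_iff_order_isomorphic:
  "interval_iso G ar I J \<longleftrightarrow> order_isomorphic (gprefix G ar) I (gprefix G ar) J"
  by (simp add: interval_iso_def order_isomorphic_def order_iso_map_def)

lemma ginterval_iff:
  assumes "gtree_wf G ar s" and "gtree_wf G ar t"
  shows "u \<in> ginterval G ar s t \<longleftrightarrow> gtree_wf G ar u \<and> tree_prefix s u \<and> tree_prefix u t"
  using assms gprefix_iff_tree_prefix[of G ar s u] gprefix_iff_tree_prefix[of G ar u t]
  by (auto simp: ginterval_def)

lemma restrict_tree_down_set:
  assumes ws: "gtree_wf G ar s" and wt: "gtree_wf G ar t" and st: "tree_prefix s t"
    and D: "D \<in> down_sets prefix (positions t - positions s)"
  shows "restrict_tree t (D \<union> positions s) \<in> ginterval G ar s t"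
    and "positions (restrict_tree t (D \<union> positions s)) - positions s = D"
proof -
  let ?u = "restrict_tree t (D \<union> positions s)"
  have "q \<in> D \<union> positions s" if "p \<in> D \<union> positions s" "q \<in> positions t" "prefix q p" for p q
    using that D positions_prefix_closed[of p s q] by (auto simp: down_sets_def)
  then have "positions ?u = (D \<union> positions s) \<inter> positions t"
    by (simp add: positions_restrict_tree)
  also have "\<dots> = D \<union> positions s"
    using D positions_mono[OF st] by (auto simp: down_sets_def)
  finally have u: "positions ?u = D \<union> positions s" .
  then show "positions ?u - positions s = D"
    using D by (auto simp: down_sets_def)
  have "tree_prefix s ?u"
    using tree_prefix_iff_positions_subset[OF st tree_prefix_restrict_tree] u by simp
  then show "?u \<in> ginterval G ar s t"
    unfolding ginterval_iff[OF ws wt] using gtree_wf_restrict_tree[OF wt] tree_prefix_restrict_tree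
    by blast
qed

lemma order_isomorphic_ginterval_down_sets:
  assumes ws: "gtree_wf G ar s" and wt: "gtree_wf G ar t" and st: "tree_prefix s t"
  shows "order_isomorphic (gprefix G ar) (ginterval G ar s t)
           (\<subseteq>) (down_sets prefix (positions t - positions s))"
proof -
  let ?I = "ginterval G ar s t" and ?f = "\<lambda>u. positions u - positions s"
  note I = ginterval_iff[OF ws wt]
  have order: "gprefix G ar u v \<longleftrightarrow> ?f u \<subseteq> ?f v" if "u \<in> ?I" "v \<in> ?I" for u v
  proof -
    have "gprefix G ar u v \<longleftrightarrow> tree_prefix u v"
      using that I gprefix_iff_tree_prefix by blast
    also have "\<dots> \<longleftrightarrow> positions u \<subseteq> positions v"
      using that I tree_prefix_iff_positions_subset by blast
    also have "\<dots> \<longleftrightarrow> ?f u \<subseteq> ?f v"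
      using that I positions_mono by blast
    finally show ?thesis .
  qed
  have "inj_on ?f ?I"
  proof (rule inj_onI)
    fix u v assume uv: "u \<in> ?I" "v \<in> ?I" and "?f u = ?f v"
    then have "positions u = positions v"
      using I positions_mono by blast
    then show "u = v"
      using uv I positions_inj by blast
  qed
  moreover have "?f ` ?I = down_sets prefix (positions t - positions s)"
  proof
    show "?f ` ?I \<subseteq> down_sets prefix (positions t - positions s)"
      using I positions_mono positions_prefix_closed by (fastforce simp: down_sets_def)
    show "down_sets prefix (positions t - positions s) \<subseteq> ?f ` ?I"
    proof
      fix D assume "D \<in> down_sets prefix (positions t - positions s)"
      from restrict_tree_down_set[OF ws wt st this] show "D \<in> ?f ` ?I"
        by (metis image_eqI)
    qed
  qed
  ultimately show ?thesis
    using order_isomorphic_image[of ?f ?I "gprefix G ar" "(\<subseteq>)"] order by metis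
qed

section \<open>Forests of positions and their shadows\<close>

lemma positions_eq_empty_iff [simp]: "positions t = {} \<longleftrightarrow> t = Leaf"
  by (cases t) auto

definition shift_root :: "nat \<Rightarrow> nat list \<Rightarrow> nat list" where
  "shift_root n p = (case p of [] \<Rightarrow> [] | i # q \<Rightarrow> (i + n) # q)"

lemma shift_root_Cons [simp]: "shift_root n (i # q) = (i + n) # q"
  by (simp add: shift_root_def)

lemma forest_Nil [simp]: "forest [] = {}"
  by (simp add: forest_def)

lemma forest_singleton: "forest [P] = (#) 0 ` P"
  by (auto simp: forest_def)

lemma forest_append: "forest (Ps @ Qs) = forest Ps \<union> shift_root (length Ps) ` forest Qs"
proof (rule set_eqI)
  fix p
  show "p \<in> forest (Ps @ Qs) \<longleftrightarrow> p \<in> forest Ps \<union> shift_root (length Ps) ` forest Qs"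
  proof (cases p)
    case (Cons i q)
    have "i # q \<in> shift_root (length Ps) ` forest Qs
        \<longleftrightarrow> length Ps \<le> i \<and> (i - length Ps) # q \<in> forest Qs"
      by (force simp: in_forest_iff)
    then show ?thesis
      using Cons by (auto simp: nth_append)
  qed (auto simp: shift_root_def in_forest_iff)
qed

lemma order_isomorphic_forest_singleton: "order_isomorphic prefix (forest [P]) prefix P"
  unfolding forest_singleton
  by (rule order_isomorphic_sym, rule prefix_order.order_isomorphic_image_embedding) simp

lemma order_isomorphic_shift_root:
  "[] \<notin> A \<Longrightarrow> order_isomorphic prefix A prefix (shift_root n ` A)"
  by (rule prefix_order.order_isomorphic_image_embedding) (auto simp: shift_root_def split: list.splits)

lemma incomparable_forest_shift_root:
  "incomparable prefix (forest Ps) (shift_root (length Ps) ` forest Qs)"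
  by (auto simp: incomparable_def in_forest_iff)

lemma order_isomorphic_forest_append:
  assumes "order_isomorphic prefix (forest Ps) prefix (forest Ps')"
    and "order_isomorphic prefix (forest Qs) prefix (forest Qs')"
  shows "order_isomorphic prefix (forest (Ps @ Qs)) prefix (forest (Ps' @ Qs'))"
  unfolding forest_append
proof (rule prefix_order.order_isomorphic_Un[OF assms(1)])
  have "order_isomorphic prefix (shift_root (length Ps) ` forest Qs) prefix (forest Qs)"
    by (rule order_isomorphic_sym, rule order_isomorphic_shift_root) simp
  also note assms(2)
  also have "order_isomorphic prefix (forest Qs') prefix (shift_root (length Ps') ` forest Qs')"
    by (rule order_isomorphic_shift_root) simp
  finally show "order_isomorphic prefix (shift_root (length Ps) ` forest Qs)
      prefix (shift_root (length Ps') ` forest Qs')" .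
qed (rule incomparable_forest_shift_root)+

lemma order_isomorphic_forest_Cons:
  assumes "order_isomorphic prefix P prefix Q"
    and "order_isomorphic prefix (forest Ps) prefix (forest Qs)"
  shows "order_isomorphic prefix (forest (P # Ps)) prefix (forest (Q # Qs))"
proof -
  have "order_isomorphic prefix (forest [P]) prefix (forest [Q])"
    using assms(1) order_isomorphic_forest_singleton order_isomorphic_cong by blast
  from order_isomorphic_forest_append[OF this assms(2)] show ?thesis
    by simp
qed

lemma order_isomorphic_forest_reindex:
  assumes \<pi>: "bij_betw \<pi> {..<length Ps} {..<length Qs}"
    and iso: "\<And>i. i < length Ps \<Longrightarrow> order_isomorphic prefix (Ps ! i) prefix (Qs ! \<pi> i)"
  shows "order_isomorphic prefix (forest Ps) prefix (forest Qs)"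
proof -
  have "\<forall>i\<in>{..<length Ps}. \<exists>f. order_iso_map prefix (Ps ! i) prefix (Qs ! \<pi> i) f"
    using iso by (simp add: order_isomorphic_def)
  then obtain g where g: "\<And>i. i < length Ps \<Longrightarrow> order_iso_map prefix (Ps ! i) prefix (Qs ! \<pi> i) (g i)"
    using bchoice[of "{..<length Ps}"] by (metis lessThan_iff)
  define h where "h p = \<pi> (hd p) # g (hd p) (tl p)" for p
  have h_Cons: "h (i # p) = \<pi> i # g i p" for i p
    by (simp add: h_def)
  have \<pi>_eq_iff: "\<pi> i = \<pi> j \<longleftrightarrow> i = j" if "i < length Ps" "j < length Ps" for i j
    using that bij_betw_imp_inj_on[OF \<pi>] by (auto dest: inj_onD)
  have "prefix p q \<longleftrightarrow> prefix (h p) (h q)" if "p \<in> forest Ps" "q \<in> forest Ps" for p q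
    using that order_iso_mapD(3)[OF g] \<pi>_eq_iff by (auto simp: in_forest_iff h_Cons)
  moreover have "h ` forest Ps = forest Qs"
  proof
    show "h ` forest Ps \<subseteq> forest Qs"
      using bij_betw_apply[OF \<pi>] order_iso_mapD(2)[OF g] by (auto simp: in_forest_iff h_Cons)
    show "forest Qs \<subseteq> h ` forest Ps"
    proof
      fix q assume "q \<in> forest Qs"
      then obtain j q' where q: "q = j # q'" "j < length Qs" "q' \<in> Qs ! j"
        by (auto simp: in_forest_iff)
      then obtain i where i: "i < length Ps" "\<pi> i = j"
        using bij_betw_imp_surj_on[OF \<pi>] by (metis imageE lessThan_iff)
      then obtain p' where "p' \<in> Ps ! i" "q' = g i p'"
        using q order_iso_mapD(1)[OF g[OF i(1)]] by (auto simp: bij_betw_def)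
      then show "q \<in> h ` forest Ps"
        using q i by (auto simp: h_Cons intro!: image_eqI[of _ _ "i # p'"])
    qed
  qed
  ultimately show ?thesis
    using prefix_order.order_isomorphic_image_embedding by metis
qed

lemma order_isomorphic_forest_nth:
  "length Ps = length Qs \<Longrightarrow> (\<And>i. i < length Ps \<Longrightarrow> order_isomorphic prefix (Ps ! i) prefix (Qs ! i))
    \<Longrightarrow> order_isomorphic prefix (forest Ps) prefix (forest Qs)"
  by (rule order_isomorphic_forest_reindex[of id]) simp_all

lemma order_isomorphic_forest_concat:
  "order_isomorphic prefix (forest (map forest Pss)) prefix (forest (concat Pss))"
proof (induction Pss)
  case (Cons Ps Pss)
  have "order_isomorphic prefix (forest ([forest Ps] @ map forest Pss)) prefix (forest (Ps @ concat Pss))"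
    using order_isomorphic_forest_singleton Cons.IH by (rule order_isomorphic_forest_append)
  then show ?case
    by simp
qed (simp add: order_isomorphic_refl)

lemma order_isomorphic_forest_filter:
  "order_isomorphic prefix (forest Ps) prefix (forest (filter (\<lambda>P. P \<noteq> {}) Ps))"
proof (induction Ps)
  case (Cons P Ps)
  show ?case
  proof (cases "P = {}")
    case True
    have "order_isomorphic prefix (forest ([{}] @ Ps)) prefix (forest ([] @ filter (\<lambda>P. P \<noteq> {}) Ps))"
      by (rule order_isomorphic_forest_append[OF _ Cons.IH]) (simp add: forest_singleton order_isomorphic_refl)
    then show ?thesis
      using True by simp
  next
    case False
    then show ?thesis
      using order_isomorphic_forest_Cons[OF order_isomorphic_refl Cons.IH] by simp
  qed
qed (simp add: order_isomorphic_refl)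

lemma forest_diff:
  "length Ps = length Qs \<Longrightarrow> forest Ps - forest Qs = forest (map2 (-) Ps Qs)"
  by (auto simp: in_forest_iff)

lemma order_isomorphic_positions_diff:
  "tree_prefix s t
    \<Longrightarrow> order_isomorphic prefix (positions t - positions s) prefix (forest (map positions (tree_diff s t)))"
proof (induction s arbitrary: t)
  case Leaf
  show ?case
    using order_isomorphic_forest_singleton[of "positions t"] by (simp add: order_isomorphic_sym)
next
  case (Node a ss)
  from Node.prems obtain ts where t: "t = Node a ts" "length ts = length ss"
    "\<forall>i<length ss. tree_prefix (ss ! i) (ts ! i)"
    by (auto elim: tree_prefix_NodeE)
  let ?Dss = "map (\<lambda>i. map positions (tree_diff (ss ! i) (ts ! i))) [0..<length ss]"
  have "positions t - positions (Node a ss) = forest (map2 (-) (map positions ts) (map positions ss))"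
    using t by (auto simp: forest_diff)
  also have "order_isomorphic prefix \<dots> prefix (forest (map forest ?Dss))"
    using t Node.IH by (intro order_isomorphic_forest_nth) auto
  also have "order_isomorphic prefix \<dots> prefix (forest (concat ?Dss))"
    by (rule order_isomorphic_forest_concat)
  also have "concat ?Dss = map positions (tree_diff (Node a ss) t)"
    using t by (simp add: map_concat comp_def)
  finally show ?case .
qed

lemma forest_shadow_forest_Cons:
  assumes "finite P" and "finite (forest Ps)"
  shows "forest_shadow prefix (forest (P # Ps)) = forest_shadow prefix P + forest_shadow prefix (forest Ps)"
proof -
  have "forest (P # Ps) = forest [P] \<union> shift_root 1 ` forest Ps"
    using forest_append[of "[P]" Ps] by simp
  also have "forest_shadow prefix \<dots> = forest_shadow prefix (forest [P])
      + forest_shadow prefix (shift_root 1 ` forest Ps)"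
    using assms incomparable_forest_shift_root[of "[P]" Ps]
    by (intro prefix_order.forest_shadow_Un) (simp_all add: forest_singleton)
  also have "forest_shadow prefix (forest [P]) = forest_shadow prefix P"
    using assms(1) order_isomorphic_forest_singleton
    by (intro order_isomorphic_forest_shadow) (simp_all add: forest_singleton)
  also have "forest_shadow prefix (shift_root 1 ` forest Ps) = forest_shadow prefix (forest Ps)"
    using assms(2) order_isomorphic_sym[OF order_isomorphic_shift_root[of "forest Ps" 1]]
    by (intro order_isomorphic_forest_shadow) simp_all
  finally show ?thesis .
qed

lemma finite_forest_positions: "finite (forest (map positions ts))"
  by (rule finite_forest) (auto simp: finite_positions)

lemma forest_shadow_forest:
  "\<forall>P\<in>set Ps. finite P \<Longrightarrow> forest_shadow prefix (forest Ps) = (\<Sum>P\<leftarrow>Ps. forest_shadow prefix P)"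
  by (induction Ps) (simp_all add: forest_shadow_forest_Cons finite_forest)

lemma sum_list_if_Leaf_sh:
  "(\<Sum>t\<leftarrow>ts. if t = Leaf then {#} else {#sh t#}) = mset (map sh (filter (\<lambda>t. t \<noteq> Leaf) ts))"
  by (induction ts) simp_all

lemma forest_shadow_positions:
  "forest_shadow prefix (positions t) = (if t = Leaf then {#} else {#sh t#})"
proof (induction t)
  case (Node a ts)
  have "forest_shadow prefix (positions (Node a ts))
      = {#Sh (forest_shadow prefix (forest (map positions ts)))#}"
    using prefix_order.forest_shadow_least[of "positions (Node a ts)" "[]"] finite_positions[of "Node a ts"]
    by simp
  also have "forest_shadow prefix (forest (map positions ts))
      = (\<Sum>t\<leftarrow>ts. if t = Leaf then {#} else {#sh t#})"
    using Node.IH by (simp add: forest_shadow_forest finite_positions cong: map_cong)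
  finally show ?case
    by (simp add: sum_list_if_Leaf_sh)
qed simp

lemma forest_shadow_forest_positions:
  "forest_shadow prefix (forest (map positions ts)) = mset (map sh (filter (\<lambda>t. t \<noteq> Leaf) ts))"
  by (simp add: forest_shadow_forest finite_positions forest_shadow_positions comp_def sum_list_if_Leaf_sh)

lemma order_isomorphic_forest_mset:
  assumes "mset (map f us) = mset (map f vs)"
    and "\<And>u v. u \<in> set us \<Longrightarrow> v \<in> set vs \<Longrightarrow> f u = f v
          \<Longrightarrow> order_isomorphic prefix (P u) prefix (P v)"
  shows "order_isomorphic prefix (forest (map P us)) prefix (forest (map P vs))"
proof -
  obtain \<pi> where \<pi>: "\<pi> permutes {..<length vs}" and perm: "permute_list \<pi> (map f vs) = map f us"
    using mset_eq_permutation[OF assms(1)] by auto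
  have len: "length us = length vs"
    using mset_eq_length[OF assms(1)] by simp
  show ?thesis
  proof (rule order_isomorphic_forest_reindex)
    show "bij_betw \<pi> {..<length (map P us)} {..<length (map P vs)}"
      using permutes_imp_bij[OF \<pi>] len by simp
    fix i assume "i < length (map P us)"
    then have i: "i < length us" "\<pi> i < length vs"
      using permutes_in_image[OF \<pi>] len by auto
    have "f (us ! i) = permute_list \<pi> (map f vs) ! i"
      using perm i by simp
    also have "\<dots> = f (vs ! \<pi> i)"
      using i len \<pi> by (subst permute_list_nth) simp_all
    finally show "order_isomorphic prefix (map P us ! i) prefix (map P vs ! \<pi> i)"
      using i assms(2) by simp
  qed
qed

lemma order_isomorphic_forest_positions_filter:
  "order_isomorphic prefix (forest (map positions ts)) prefix
     (forest (map positions (filter (\<lambda>t. t \<noteq> Leaf) ts)))"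
  using order_isomorphic_forest_filter[of "map positions ts"] by (simp add: filter_map comp_def)

lemma order_isomorphic_forest_positions_of_sh_diamond:
  fixes us vs :: "'a gtree list"
  assumes "sh_diamond us = sh_diamond vs"
    and "\<And>u v. u \<in> set us \<Longrightarrow> v \<in> set vs \<Longrightarrow> u \<noteq> Leaf \<Longrightarrow> v \<noteq> Leaf \<Longrightarrow> sh u = sh v
          \<Longrightarrow> order_isomorphic prefix (positions u) prefix (positions v)"
  shows "order_isomorphic prefix (forest (map positions us)) prefix (forest (map positions vs))"
proof -
  have "order_isomorphic prefix (forest (map positions (filter (\<lambda>t. t \<noteq> Leaf) us)))
      prefix (forest (map positions (filter (\<lambda>t. t \<noteq> Leaf) vs)))"
  proof (rule order_isomorphic_forest_mset[of sh])
    show "mset (map sh (filter (\<lambda>t. t \<noteq> Leaf) us)) = mset (map sh (filter (\<lambda>t. t \<noteq> Leaf) vs))"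
      using assms(1) by (simp add: sh_diamond_def)
    fix u v assume "u \<in> set (filter (\<lambda>t. t \<noteq> Leaf) us)" "v \<in> set (filter (\<lambda>t. t \<noteq> Leaf) vs)"
      and "sh u = sh v"
    then show "order_isomorphic prefix (positions u) prefix (positions v)"
      using assms(2) by simp
  qed
  then show ?thesis
    using order_isomorphic_forest_positions_filter order_isomorphic_cong by blast
qed

lemma order_isomorphic_positions_of_sh:
  fixes r r' :: "'a gtree"
  shows "r \<noteq> Leaf \<Longrightarrow> r' \<noteq> Leaf \<Longrightarrow> sh r = sh r'
    \<Longrightarrow> order_isomorphic prefix (positions r) prefix (positions r')"
proof (induction r arbitrary: r')
  case (Node a ts)
  then obtain b ts' where r': "r' = Node b ts'"
    by (cases r') auto
  have "order_isomorphic prefix (forest (map positions ts)) prefix (forest (map positions ts'))"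
    using Node r' by (intro order_isomorphic_forest_positions_of_sh_diamond) (simp_all add: sh_diamond_def)
  then show ?case
    using r' by (simp add: prefix_order.order_isomorphic_insert_least)
qed simp

theorem order_isomorphic_forest_positions_iff:
  fixes rs rs' :: "'a gtree list"
  shows "order_isomorphic prefix (forest (map positions rs)) prefix (forest (map positions rs'))
    \<longleftrightarrow> sh_diamond rs = sh_diamond rs'"
proof
  assume "order_isomorphic prefix (forest (map positions rs)) prefix (forest (map positions rs'))"
  then have "forest_shadow prefix (forest (map positions rs)) = forest_shadow prefix (forest (map positions rs'))"
    by (intro order_isomorphic_forest_shadow finite_forest_positions)
  then show "sh_diamond rs = sh_diamond rs'"
    by (simp add: forest_shadow_forest_positions sh_diamond_def)
next
  assume "sh_diamond rs = sh_diamond rs'"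
  then show "order_isomorphic prefix (forest (map positions rs)) prefix (forest (map positions rs'))"
    using order_isomorphic_positions_of_sh by (rule order_isomorphic_forest_positions_of_sh_diamond)
qed

theorem theorem3p11:
  fixes G :: "'a set" and ar :: "'a \<Rightarrow> nat" and s t s' t' :: "'a gtree"
  assumes "alphabet G ar"
    and "gtree_wf G ar s" and "gtree_wf G ar t" and "gtree_wf G ar s'" and "gtree_wf G ar t'"
    and "gprefix G ar s t" and "gprefix G ar s' t'"
  shows "interval_iso G ar (ginterval G ar s t) (ginterval G ar s' t') \<longleftrightarrow>
         sh_diamond (tdiff G ar t s) = sh_diamond (tdiff G ar t' s')"
proof -
  have st: "tree_prefix s t" and st': "tree_prefix s' t'"
    using assms(2,4,6,7) gprefix_iff_tree_prefix by blast+
  let ?Y = "positions t - positions s" and ?Y' = "positions t' - positions s'"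
  have "interval_iso G ar (ginterval G ar s t) (ginterval G ar s' t')
      \<longleftrightarrow> order_isomorphic (\<subseteq>) (down_sets prefix ?Y) (\<subseteq>) (down_sets prefix ?Y')"
    unfolding interval_iso_iff_order_isomorphic
    using order_isomorphic_ginterval_down_sets[OF assms(2,3) st]
      order_isomorphic_ginterval_down_sets[OF assms(4,5) st']
    by (rule order_isomorphic_cong)
  also have "\<dots> \<longleftrightarrow> order_isomorphic prefix ?Y prefix ?Y'"
    by (simp add: prefix_order.order_isomorphic_down_sets_iff finite_positions)
  also have "\<dots> \<longleftrightarrow> order_isomorphic prefix (forest (map positions (tree_diff s t)))
      prefix (forest (map positions (tree_diff s' t')))"
    using order_isomorphic_positions_diff[OF st] order_isomorphic_positions_diff[OF st']
    by (rule order_isomorphic_cong)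
  also have "\<dots> \<longleftrightarrow> sh_diamond (tdiff G ar t s) = sh_diamond (tdiff G ar t' s')"
    using assms(3,5) st st' by (simp add: order_isomorphic_forest_positions_iff tdiff_eq_tree_diff)
  finally show ?thesis .
qed

end
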